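(* Let $n\in\mathbb{N}$, $1\le r<n$, and $W_0\in\mathbb{R}^{n\times n}$ with $\operatorname{Tr}(W_0)\neq 0$; assume the LoRA gradient-descent iterates for $\min_{B\in\mathbb{R}^{n\times r},A\in\mathbb{R}^{r\times n}}\frac12\operatorname{Tr}^2(W_0-BA)$ remain uniformly bounded. Let $X_0\in\mathbb{R}^{r\times n}$ with $\|X_0\|\neq 0$ and $Y_0=\mathbf{0}_{n\times r}$. Let $U$ solve $U'(t)=\operatorname{Tr}(W_0-U(t))I_n$, $U(0)=Y_0X_0$, and let $(Y,X)$ solve $Y'=\operatorname{Tr}(W_0-YX)X^T$, $X'=\operatorname{Tr}(W_0-YX)Y^T$, $Y(0)=Y_0$, $X(0)=X_0$. Then $$\lim_{t\to\infty}\frac{\|Y(t)X(t)-U(t)\|}{\|U(t)\|}=\frac{\sqrt{n\|X_0^TX_0\|^2-\|X_0\|^4}}{\|X_0\|^2}.$$ Moreover, if the entries of $X_0$ are drawn i.i.d. from $\mathcal{N}(0,\sigma^2)$ with $\sigma^2>0$, then $$\mathbb{E}\left[\lim_{t\to\infty}\frac{\|Y(t)X(t)-U(t)\|^2}{\|U(t)\|^2}\right]=\frac{n^2+n-2}{nr+2},\qquad \mathbb{E}\left[\lim_{t\to\infty}\frac{\|Y(t)X(t)-U(t)\|}{\|U(t)\|}\right]\le\sqrt{\frac{n^2+n-2}{nr+2}}.$$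
   Context: $\operatorname{Tr}^2(W):=(\operatorname{Tr}W)^2$; $\|\cdot\|$ is the Frobenius norm. "LoRA gradient-descent iterates" are the iterates of fixed-step gradient descent on the factors $B,A$ of $g(B,A)=\frac12\operatorname{Tr}^2(W_0-BA)$; uniform boundedness means their Frobenius norms are bounded independently of step size and iteration. The expectations are over the random initialization $X_0$. *)

theory Defs
  imports "HOL-Analysis.Analysis" "HOL-Probability.Probability"
begin

text \<open>Frobenius norm of a matrix of type real^'c^'r is the library norm (L2 norm of all entries).\<close>

text \<open>LoRA gradient-descent iterates with step size eta on
  g(B,A) = 1/2 (trace (W0 - B A))^2, started at (B0, A0).
  grad_B g = - trace(W0 - B A) A^T,  grad_A g = - trace(W0 - B A) B^T.\<close>
fun lora_gd :: "real^'n^'n \<Rightarrow> real \<Rightarrow> real^'r^'n \<Rightarrow> real^'n^'r \<Rightarrow> nat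
                 \<Rightarrow> (real^'r^'n) \<times> (real^'n^'r)" where
  "lora_gd W0 eta B0 A0 0 = (B0, A0)"
| "lora_gd W0 eta B0 A0 (Suc k) =
     (let (B, A) = lora_gd W0 eta B0 A0 k; c = trace (W0 - B ** A)
      in (B + (eta * c) *\<^sub>R transpose A, A + (eta * c) *\<^sub>R transpose B))"

definition lora_gd_bounded :: "real^'n^'n \<Rightarrow> real^'r^'n \<Rightarrow> real^'n^'r \<Rightarrow> bool" where
  "lora_gd_bounded W0 B0 A0 \<longleftrightarrow>
     (\<exists>eta0 > 0. \<exists>C. \<forall>eta \<in> {0<..eta0}. \<forall>k.
        norm (fst (lora_gd W0 eta B0 A0 k)) \<le> C \<and> norm (snd (lora_gd W0 eta B0 A0 k)) \<le> C)"

definition full_flow :: "real^'n^'n \<Rightarrow> real^'n^'n \<Rightarrow> (real \<Rightarrow> real^'n^'n) \<Rightarrow> bool" where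
  "full_flow W0 U0 U \<longleftrightarrow> U 0 = U0 \<and>
     (\<forall>t\<ge>0. (U has_vector_derivative (trace (W0 - U t) *\<^sub>R mat 1)) (at t within {0..}))"

definition lora_flow :: "real^'n^'n \<Rightarrow> real^'r^'n \<Rightarrow> real^'n^'r
      \<Rightarrow> (real \<Rightarrow> real^'r^'n) \<Rightarrow> (real \<Rightarrow> real^'n^'r) \<Rightarrow> bool" where
  "lora_flow W0 Y0 X0 Y X \<longleftrightarrow> Y 0 = Y0 \<and> X 0 = X0 \<and>
     (\<forall>t\<ge>0. (Y has_vector_derivative (trace (W0 - Y t ** X t) *\<^sub>R transpose (X t))) (at t within {0..})
          \<and> (X has_vector_derivative (trace (W0 - Y t ** X t) *\<^sub>R transpose (Y t))) (at t within {0..}))"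

text \<open>Law of a random r x n matrix with i.i.d. N(0, sigma^2) entries (sigma = standard deviation).\<close>
definition gauss_matrix :: "real \<Rightarrow> (real^'n^'r) measure" where
  "gauss_matrix \<sigma> = density lborel (\<lambda>X. ennreal (\<Prod>i\<in>UNIV. \<Prod>j\<in>UNIV. normal_density 0 \<sigma> (X $ i $ j)))"

end

theory Submission
  imports Defs
begin

text \<open>Started at \<open>Y = 0\<close>, the LoRA flow conserves the entrywise quantities
  \<open>Y\<^sub>i\<^sub>k X\<^sub>b\<^sub>j - X\<^sub>k\<^sub>i Y\<^sub>j\<^sub>b\<close> and \<open>X\<^sub>k\<^sub>i X\<^sub>b\<^sub>j - Y\<^sub>i\<^sub>k Y\<^sub>j\<^sub>b\<close>. Hence \<open>Y X\<close> stays a multiple of the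
  Gram matrix \<open>X\<^sub>0\<^sup>T X\<^sub>0\<close>, and its trace \<open>T\<close> obeys \<open>T' = (tr W\<^sub>0 - T) (\<parallel>X\<parallel>\<^sup>2 + \<parallel>Y\<parallel>\<^sup>2)\<close>
  with \<open>\<parallel>X\<parallel>\<^sup>2 + \<parallel>Y\<parallel>\<^sup>2 \<ge> \<parallel>X\<^sub>0\<parallel>\<^sup>2\<close>, so \<open>T \<longrightarrow> tr W\<^sub>0\<close>. The full flow stays a multiple of the
  identity with the same limiting trace, so the relative error tends to the distance between
  \<open>X\<^sub>0\<^sup>T X\<^sub>0 / \<parallel>X\<^sub>0\<parallel>\<^sup>2\<close> and \<open>I / n\<close>; its square is \<open>n \<parallel>X\<^sub>0\<^sup>T X\<^sub>0\<parallel>\<^sup>2 / \<parallel>X\<^sub>0\<parallel>\<^sup>4 - 1\<close>.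

  For Gaussian \<open>X\<^sub>0\<close>, write \<open>1 / \<parallel>x\<parallel>\<^sup>4 = \<integral>\<^sub>0\<^sup>\<infinity> t exp (- t \<parallel>x\<parallel>\<^sup>2) dt\<close>: the weight
  \<open>exp (- t \<parallel>x\<parallel>\<^sup>2)\<close> turns the law \<open>N(0, \<sigma>\<^sup>2)\<close> of each entry into a multiple of
  \<open>N(0, s\<^sup>2)\<close>. So if \<open>E f = \<kappa> E \<parallel>x\<parallel>\<^sup>4\<close> for every variance, then \<open>E (f / \<parallel>x\<parallel>\<^sup>4) = \<kappa>\<close>.
  Fourth moments give \<open>E \<parallel>X\<^sup>T X\<parallel>\<^sup>2 = r n (n + r + 1) \<sigma>\<^sup>4\<close> and \<open>E \<parallel>X\<parallel>\<^sup>4 = r n (r n + 2) \<sigma>\<^sup>4\<close>,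
  and Jensen's inequality bounds the expected relative error itself.\<close>

section \<open>Gradient flows\<close>

lemma transpose_nth: "transpose (A::real^'a^'b) $ i $ j = A $ j $ i"
  by (simp add: transpose_def)

lemma matrix_matrix_mult_nth:
  "((A::real^'a^'b) ** (B::real^'c^'a)) $ i $ j = (\<Sum>k\<in>UNIV. A $ i $ k * B $ k $ j)"
  by (simp add: matrix_matrix_mult_def)

lemma norm_matrix_power2: "(norm (M::real^'a^'b))\<^sup>2 = (\<Sum>i\<in>UNIV. \<Sum>j\<in>UNIV. (M $ i $ j)\<^sup>2)"
  unfolding power2_norm_eq_inner inner_vec_def inner_real_def by (simp add: power2_eq_square)

lemma has_vector_derivative_matrix_nth:
  assumes "(f has_vector_derivative (f'::real^'a^'b)) (at t within S)"
  shows "((\<lambda>s. f s $ i $ j) has_real_derivative f' $ i $ j) (at t within S)"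
proof -
  have "((\<lambda>s. f s $ i) has_vector_derivative f' $ i) (at t within S)"
    by (rule bounded_linear.has_vector_derivative[OF bounded_linear_vec_nth assms])
  then have "((\<lambda>s. f s $ i $ j) has_vector_derivative f' $ i $ j) (at t within S)"
    by (rule bounded_linear.has_vector_derivative[OF bounded_linear_vec_nth])
  then show ?thesis
    by (simp add: has_real_derivative_iff_has_vector_derivative)
qed

lemma has_real_derivative_zero_imp_constant_nonneg:
  fixes f :: "real \<Rightarrow> real"
  assumes "\<And>t. t \<ge> 0 \<Longrightarrow> (f has_real_derivative 0) (at t within {0..})" and "t \<ge> 0"
  shows "f t = f 0"
  using has_field_derivative_zero_constant[of "{0..}" f] assms by fastforce

lemma has_real_derivative_nonpos_imp_le_initial:
  fixes V :: "real \<Rightarrow> real"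
  assumes "\<And>x. x \<ge> 0 \<Longrightarrow> (V has_real_derivative V' x) (at x within {0..})"
    and "\<And>x. x \<ge> 0 \<Longrightarrow> V' x \<le> 0" and "t \<ge> 0"
  shows "V t \<le> V 0"
proof -
  have "(V has_derivative (\<lambda>h. V' x * h)) (at x within {0..t})" if "0 \<le> x" for x
    using assms(1)[OF that] by (auto simp: has_field_derivative_def intro: has_derivative_subset)
  then obtain x where x: "x \<in> {0..t}" "V t - V 0 = V' x * (t - 0)"
    using mvt_very_simple[OF \<open>t \<ge> 0\<close>, of V "\<lambda>x h. V' x * h"] by auto
  then show ?thesis
    using assms(2)[of x] \<open>t \<ge> 0\<close> mult_nonpos_nonneg[of "V' x" t] by simp
qed

lemma relaxation_tendsto:
  fixes f s :: "real \<Rightarrow> real"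
  assumes deriv: "\<And>t. t \<ge> 0 \<Longrightarrow> (f has_real_derivative (a - f t) * s t) (at t within {0..})"
    and rate: "\<And>t. t \<ge> 0 \<Longrightarrow> s t \<ge> k" and "k > 0"
  shows "(f \<longlongrightarrow> a) at_top"
proof -
  define V where "V t = (f t - a)\<^sup>2 * exp (2 * k * t)" for t
  have V_le: "V t \<le> V 0" if "t \<ge> 0" for t
  proof (rule has_real_derivative_nonpos_imp_le_initial[OF _ _ that])
    fix x :: real
    assume "x \<ge> 0"
    show "(V has_real_derivative - 2 * (f x - a)\<^sup>2 * (s x - k) * exp (2 * k * x)) (at x within {0..})"
      unfolding V_def[abs_def]
      by (auto intro!: derivative_eq_intros deriv[OF \<open>x \<ge> 0\<close>] simp: power2_eq_square algebra_simps)
    show "- 2 * (f x - a)\<^sup>2 * (s x - k) * exp (2 * k * x) \<le> 0"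
      using rate[OF \<open>x \<ge> 0\<close>] by simp
  qed
  have bound: "norm (f t - a) \<le> \<bar>f 0 - a\<bar> * exp (- k * t)" if "t \<ge> 0" for t
  proof -
    have "(f t - a)\<^sup>2 \<le> (\<bar>f 0 - a\<bar> * exp (- k * t))\<^sup>2"
    proof -
      have "exp (2 * k * t) = (exp (k * t))\<^sup>2"
        using exp_double[of "k * t"] by (simp add: mult.assoc)
      then have "(f t - a)\<^sup>2 \<le> (f 0 - a)\<^sup>2 / (exp (k * t))\<^sup>2"
        using V_le[OF that] by (simp add: V_def pos_le_divide_eq)
      also have "\<dots> = (\<bar>f 0 - a\<bar> * exp (- k * t))\<^sup>2"
        by (simp add: exp_minus field_simps)
      finally show ?thesis .
    qed
    then show ?thesis
      using power2_le_imp_le[of "\<bar>f t - a\<bar>"] by simp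
  qed
  have "((\<lambda>t. \<bar>f 0 - a\<bar> * exp (- k * t)) \<longlongrightarrow> 0) at_top"
    by (intro tendsto_mult_right_zero filterlim_compose[OF exp_at_bot]
          filterlim_tendsto_neg_mult_at_bot[OF tendsto_const] filterlim_ident) (simp add: \<open>k > 0\<close>)
  then have "((\<lambda>t. f t - a) \<longlongrightarrow> 0) at_top"
    by (rule Lim_null_comparison[rotated]) (intro eventually_at_top_linorderI[of 0] bound)
  then show ?thesis
    by (simp add: LIM_zero_iff)
qed

lemma lora_flow_nth_derivatives:
  fixes Y :: "real \<Rightarrow> real^'r^'n" and X :: "real \<Rightarrow> real^'n^'r"
  assumes flow: "lora_flow W0 Y0 X0 Y X" and "t \<ge> 0"
  shows "((\<lambda>s. Y s $ i $ k) has_real_derivative trace (W0 - Y t ** X t) * X t $ k $ i)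
           (at t within {0..})"
    and "((\<lambda>s. X s $ k $ i) has_real_derivative trace (W0 - Y t ** X t) * Y t $ i $ k)
           (at t within {0..})"
proof -
  have "(Y has_vector_derivative trace (W0 - Y t ** X t) *\<^sub>R transpose (X t)) (at t within {0..})"
    and "(X has_vector_derivative trace (W0 - Y t ** X t) *\<^sub>R transpose (Y t)) (at t within {0..})"
    using flow \<open>t \<ge> 0\<close> by (auto simp: lora_flow_def)
  from this[THEN has_vector_derivative_matrix_nth] show
    "((\<lambda>s. Y s $ i $ k) has_real_derivative trace (W0 - Y t ** X t) * X t $ k $ i)
       (at t within {0..})"
    "((\<lambda>s. X s $ k $ i) has_real_derivative trace (W0 - Y t ** X t) * Y t $ i $ k)
       (at t within {0..})"
    by (simp_all add: transpose_nth)
qed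

lemma lora_flow_conserved:
  fixes Y :: "real \<Rightarrow> real^'r^'n" and X :: "real \<Rightarrow> real^'n^'r"
  assumes flow: "lora_flow W0 Y0 X0 Y X" and "t \<ge> 0"
  shows "Y t $ i $ k * X t $ b $ j - X t $ k $ i * Y t $ j $ b
           = Y0 $ i $ k * X0 $ b $ j - X0 $ k $ i * Y0 $ j $ b"
    and "X t $ k $ i * X t $ b $ j - Y t $ i $ k * Y t $ j $ b
           = X0 $ k $ i * X0 $ b $ j - Y0 $ i $ k * Y0 $ j $ b"
proof -
  have init: "Y 0 = Y0" "X 0 = X0"
    using flow by (auto simp: lora_flow_def)
  note d = lora_flow_nth_derivatives[OF flow]
  have "(\<lambda>s. Y s $ i $ k * X s $ b $ j - X s $ k $ i * Y s $ j $ b) t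
      = (\<lambda>s. Y s $ i $ k * X s $ b $ j - X s $ k $ i * Y s $ j $ b) 0"
    by (rule has_real_derivative_zero_imp_constant_nonneg[OF _ \<open>t \<ge> 0\<close>])
      (auto intro!: derivative_eq_intros d simp: algebra_simps)
  then show "Y t $ i $ k * X t $ b $ j - X t $ k $ i * Y t $ j $ b
      = Y0 $ i $ k * X0 $ b $ j - X0 $ k $ i * Y0 $ j $ b"
    by (simp add: init)
  have "(\<lambda>s. X s $ k $ i * X s $ b $ j - Y s $ i $ k * Y s $ j $ b) t
      = (\<lambda>s. X s $ k $ i * X s $ b $ j - Y s $ i $ k * Y s $ j $ b) 0"
    by (rule has_real_derivative_zero_imp_constant_nonneg[OF _ \<open>t \<ge> 0\<close>])
      (auto intro!: derivative_eq_intros d simp: algebra_simps)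
  then show "X t $ k $ i * X t $ b $ j - Y t $ i $ k * Y t $ j $ b
      = X0 $ k $ i * X0 $ b $ j - Y0 $ i $ k * Y0 $ j $ b"
    by (simp add: init)
qed

lemma lora_flow_norm_imbalance:
  fixes Y :: "real \<Rightarrow> real^'r^'n" and X :: "real \<Rightarrow> real^'n^'r"
  assumes flow: "lora_flow W0 Y0 X0 Y X" and "t \<ge> 0"
  shows "(norm (X t))\<^sup>2 - (norm (Y t))\<^sup>2 = (norm X0)\<^sup>2 - (norm Y0)\<^sup>2"
proof -
  have imbalance_sum: "(norm (X' :: real^'n^'r))\<^sup>2 - (norm (Y' :: real^'r^'n))\<^sup>2
      = (\<Sum>k\<in>UNIV. \<Sum>i\<in>UNIV. X' $ k $ i * X' $ k $ i - Y' $ i $ k * Y' $ i $ k)" for X' Y'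
    unfolding norm_matrix_power2 sum.swap[of _ "UNIV::'n set"]
    by (simp add: sum_subtractf power2_eq_square)
  show ?thesis
    unfolding imbalance_sum by (simp add: lora_flow_conserved(2)[OF flow \<open>t \<ge> 0\<close>])
qed

lemma lora_flow_trace_tendsto:
  fixes Y :: "real \<Rightarrow> real^'r^'n" and X :: "real \<Rightarrow> real^'n^'r"
  assumes flow: "lora_flow W0 Y0 X0 Y X" and imbalance: "norm Y0 < norm X0"
  shows "((\<lambda>t. trace (Y t ** X t)) \<longlongrightarrow> trace W0) at_top"
proof (rule relaxation_tendsto)
  let ?S = "\<lambda>t. (norm (X t))\<^sup>2 + (norm (Y t))\<^sup>2"
  fix t :: real
  assume "t \<ge> 0"
  note d = lora_flow_nth_derivatives[OF flow this]
  have trace_eq: "trace (Y s ** X s) = (\<Sum>i\<in>UNIV. \<Sum>k\<in>UNIV. Y s $ i $ k * X s $ k $ i)" for s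
    by (simp add: trace_def matrix_matrix_mult_nth)
  have "((\<lambda>t. trace (Y t ** X t)) has_real_derivative
      (\<Sum>i\<in>UNIV. \<Sum>k\<in>UNIV. trace (W0 - Y t ** X t) * (X t $ k $ i * X t $ k $ i + Y t $ i $ k * Y t $ i $ k)))
      (at t within {0..})"
    unfolding trace_eq by (auto intro!: derivative_eq_intros d simp: algebra_simps)
  moreover have "?S t = (\<Sum>i\<in>UNIV. \<Sum>k\<in>UNIV. X t $ k $ i * X t $ k $ i + Y t $ i $ k * Y t $ i $ k)"
    unfolding norm_matrix_power2 sum.swap[of _ "UNIV::'n set"]
    by (simp add: sum.distrib power2_eq_square)
  ultimately show "((\<lambda>t. trace (Y t ** X t)) has_real_derivative (trace W0 - trace (Y t ** X t)) * ?S t)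
      (at t within {0..})"
    by (simp add: trace_sub sum_distrib_left)
  show "(norm X0)\<^sup>2 - (norm Y0)\<^sup>2 \<le> ?S t"
    using lora_flow_norm_imbalance[OF flow \<open>t \<ge> 0\<close>] zero_le_power2[of "norm (Y t)"] by linarith
next
  show "(norm X0)\<^sup>2 - (norm Y0)\<^sup>2 > 0"
    using imbalance by (simp add: power_strict_mono)
qed

lemma lora_flow_product_from_zero:
  fixes Y :: "real \<Rightarrow> real^'r^'n" and X :: "real \<Rightarrow> real^'n^'r"
  assumes flow: "lora_flow W0 0 X0 Y X" and "t \<ge> 0"
  shows "(norm X0)\<^sup>2 *\<^sub>R (Y t ** X t) = trace (Y t ** X t) *\<^sub>R (transpose X0 ** X0)"
proof -
  have balanced: "Y t $ i $ k * X t $ b $ j = X t $ k $ i * Y t $ j $ b" for i k b j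
    using lora_flow_conserved(1)[OF flow \<open>t \<ge> 0\<close>, of i k b j] by simp
  have gram: "X t $ k $ i * X t $ b $ j - Y t $ i $ k * Y t $ j $ b = X0 $ k $ i * X0 $ b $ j"
    for i k b j
    using lora_flow_conserved(2)[OF flow \<open>t \<ge> 0\<close>, of k i b j] by simp
  have trace_eq: "trace (Y t ** X t) = (\<Sum>b\<in>UNIV. \<Sum>l\<in>UNIV. Y t $ l $ b * X t $ b $ l)"
    by (simp add: trace_def matrix_matrix_mult_nth sum.swap[of _ "UNIV::'n set"])
  have norm_eq: "(norm X0)\<^sup>2 = (\<Sum>b\<in>UNIV. \<Sum>l\<in>UNIV. (X t $ b $ l)\<^sup>2 - (Y t $ l $ b)\<^sup>2)"
    unfolding norm_matrix_power2 using gram by (simp add: power2_eq_square)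
  have "(norm X0)\<^sup>2 * (Y t $ i $ k * X t $ k $ j) = trace (Y t ** X t) * (X0 $ k $ i * X0 $ k $ j)"
    for i j k
  proof -
    have "(norm X0)\<^sup>2 * (Y t $ i $ k * X t $ k $ j)
        = (\<Sum>b\<in>UNIV. \<Sum>l\<in>UNIV. Y t $ i $ k * X t $ k $ j * ((X t $ b $ l)\<^sup>2 - (Y t $ l $ b)\<^sup>2))"
      by (simp add: norm_eq sum_distrib_left sum_distrib_right mult_ac)
    also have "\<dots> = (\<Sum>b\<in>UNIV. \<Sum>l\<in>UNIV.
        Y t $ l $ b * X t $ b $ l * (X t $ k $ i * X t $ k $ j - Y t $ i $ k * Y t $ j $ k))"
    proof (intro sum.cong refl)
      fix b l
      show "Y t $ i $ k * X t $ k $ j * ((X t $ b $ l)\<^sup>2 - (Y t $ l $ b)\<^sup>2) =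
          Y t $ l $ b * X t $ b $ l * (X t $ k $ i * X t $ k $ j - Y t $ i $ k * Y t $ j $ k)"
        using balanced[of l b k i] balanced[of l b k j] balanced[of i k b l] by algebra
    qed
    also have "\<dots> = trace (Y t ** X t) * (X0 $ k $ i * X0 $ k $ j)"
      by (simp add: gram trace_eq sum_distrib_right)
    finally show ?thesis .
  qed
  then show ?thesis
    by (simp add: vec_eq_iff matrix_matrix_mult_nth transpose_nth sum_distrib_left)
qed

lemma lora_flow_product_tendsto:
  fixes Y :: "real \<Rightarrow> real^'r^'n" and X :: "real \<Rightarrow> real^'n^'r"
  assumes flow: "lora_flow W0 0 X0 Y X" and "X0 \<noteq> 0"
  shows "((\<lambda>t. Y t ** X t) \<longlongrightarrow> (trace W0 / (norm X0)\<^sup>2) *\<^sub>R (transpose X0 ** X0)) at_top"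
proof -
  have "((\<lambda>t. (trace (Y t ** X t) / (norm X0)\<^sup>2) *\<^sub>R (transpose X0 ** X0))
      \<longlongrightarrow> (trace W0 / (norm X0)\<^sup>2) *\<^sub>R (transpose X0 ** X0)) at_top"
    using \<open>X0 \<noteq> 0\<close> by (intro tendsto_intros lora_flow_trace_tendsto[OF flow]) auto
  moreover have "\<forall>\<^sub>F t in at_top.
      (trace (Y t ** X t) / (norm X0)\<^sup>2) *\<^sub>R (transpose X0 ** X0) = Y t ** X t"
  proof (rule eventually_at_top_linorderI[of 0])
    fix t :: real
    assume "t \<ge> 0"
    from lora_flow_product_from_zero[OF flow this] \<open>X0 \<noteq> 0\<close>
    show "(trace (Y t ** X t) / (norm X0)\<^sup>2) *\<^sub>R (transpose X0 ** X0) = Y t ** X t"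
      by (simp add: vec_eq_iff field_simps)
  qed
  ultimately show ?thesis
    by (rule Lim_transform_eventually)
qed

lemma full_flow_nth_derivative:
  fixes U :: "real \<Rightarrow> real^'n^'n"
  assumes flow: "full_flow W0 U0 U" and "t \<ge> 0"
  shows "((\<lambda>s. U s $ i $ j) has_real_derivative (if i = j then trace W0 - trace (U t) else 0))
           (at t within {0..})"
proof -
  have "(U has_vector_derivative trace (W0 - U t) *\<^sub>R mat 1) (at t within {0..})"
    using flow \<open>t \<ge> 0\<close> by (simp add: full_flow_def)
  from has_vector_derivative_matrix_nth[OF this, of i j] show ?thesis
    by (cases "i = j") (simp_all add: mat_def trace_sub)
qed

lemma full_flow_trace_tendsto:
  fixes U :: "real \<Rightarrow> real^'n^'n"
  assumes flow: "full_flow W0 U0 U"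
  shows "((\<lambda>t. trace (U t)) \<longlongrightarrow> trace W0) at_top"
proof (rule relaxation_tendsto)
  fix t :: real
  assume "t \<ge> 0"
  have "((\<lambda>t. \<Sum>i\<in>UNIV. U t $ i $ i) has_real_derivative
      (\<Sum>i\<in>(UNIV::'n set). trace W0 - trace (U t))) (at t within {0..})"
    by (intro DERIV_sum) (use full_flow_nth_derivative[OF flow \<open>t \<ge> 0\<close>, of i i for i] in simp)
  then show "((\<lambda>t. trace (U t)) has_real_derivative (trace W0 - trace (U t)) * real CARD('n))
      (at t within {0..})"
    by (simp add: trace_def[abs_def] mult.commute)
qed auto

lemma full_flow_from_zero:
  fixes U :: "real \<Rightarrow> real^'n^'n"
  assumes flow: "full_flow W0 0 U" and "t \<ge> 0"
  shows "U t = (trace (U t) / real CARD('n)) *\<^sub>R mat 1"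
proof -
  have U0: "U 0 = 0"
    using flow by (simp add: full_flow_def)
  note d = full_flow_nth_derivative[OF flow]
  have off_diagonal: "U t $ i $ j = 0" if "i \<noteq> j" for i j
    using has_real_derivative_zero_imp_constant_nonneg[of "\<lambda>s. U s $ i $ j", OF _ \<open>t \<ge> 0\<close>]
      d[of _ i j] that by (simp add: U0)
  have diagonal: "U t $ i $ i = U t $ j $ j" for i j
    using has_real_derivative_zero_imp_constant_nonneg[of "\<lambda>s. U s $ i $ i - U s $ j $ j",
        OF _ \<open>t \<ge> 0\<close>] DERIV_diff[OF d[of _ i i] d[of _ j j]] by (simp add: U0)
  have "trace (U t) = (\<Sum>j::'n\<in>UNIV. U t $ i $ i)" for i
    unfolding trace_def by (intro sum.cong refl diagonal)
  then have "U t $ i $ i = trace (U t) / real CARD('n)" for i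
    by (simp add: field_simps)
  then show ?thesis
    using off_diagonal by (simp add: vec_eq_iff mat_def)
qed

lemma full_flow_tendsto:
  fixes U :: "real \<Rightarrow> real^'n^'n"
  assumes flow: "full_flow W0 0 U"
  shows "(U \<longlongrightarrow> (trace W0 / real CARD('n)) *\<^sub>R mat 1) at_top"
proof -
  have "((\<lambda>t. (trace (U t) / real CARD('n)) *\<^sub>R (mat 1 :: real^'n^'n))
      \<longlongrightarrow> (trace W0 / real CARD('n)) *\<^sub>R mat 1) at_top"
    by (intro tendsto_intros full_flow_trace_tendsto[OF flow]) simp
  moreover have "\<forall>\<^sub>F t in at_top. (trace (U t) / real CARD('n)) *\<^sub>R mat 1 = U t"
    by (rule eventually_at_top_linorderI[of 0]) (simp flip: full_flow_from_zero[OF flow])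
  ultimately show ?thesis
    by (rule Lim_transform_eventually)
qed

section \<open>The limiting relative error\<close>

lemma inner_mat_1: "inner (M::real^'n^'n) (mat 1) = trace M"
  by (simp add: inner_vec_def mat_def trace_def if_distrib cong: if_cong)

lemma norm_mat_1_power2: "(norm (mat 1 :: real^'n^'n))\<^sup>2 = real CARD('n)"
  using inner_mat_1[of "mat 1"] by (simp add: power2_norm_eq_inner trace_I)

lemma trace_transpose_mult_self: "trace (transpose (X::real^'n^'r) ** X) = (norm X)\<^sup>2"
  unfolding trace_def matrix_matrix_mult_nth transpose_nth norm_matrix_power2
  by (subst sum.swap) (simp add: power2_eq_square)

lemma trace_power2_le: "(trace (M::real^'n^'n))\<^sup>2 \<le> real CARD('n) * (norm M)\<^sup>2"
  using Cauchy_Schwarz_ineq[of M "mat 1"]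
  by (simp add: inner_mat_1 norm_mat_1_power2 mult.commute flip: power2_norm_eq_inner)

lemma relative_distance_to_identity:
  fixes P :: "real^'n^'n"
  assumes "a \<noteq> 0" and "trace P > 0"
  shows "norm ((a / trace P) *\<^sub>R P - (a / real CARD('n)) *\<^sub>R mat 1) / norm ((a / real CARD('n)) *\<^sub>R (mat 1 :: real^'n^'n))
    = sqrt (real CARD('n) * (norm P)\<^sup>2 - (trace P)\<^sup>2) / trace P"
proof -
  define n where "n = real CARD('n)"
  define N where "N = trace P"
  define L where "L = norm ((a / N) *\<^sub>R P - (a / n) *\<^sub>R mat 1) / norm ((a / n) *\<^sub>R (mat 1 :: real^'n^'n))"
  have "n > 0" "N > 0"
    using \<open>trace P > 0\<close> by (simp_all add: n_def N_def)
  have inner_P_1: "inner P (mat 1) = N" and norm_1: "(norm (mat 1 :: real^'n^'n))\<^sup>2 = n"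
    by (simp_all add: inner_mat_1 N_def norm_mat_1_power2 n_def)
  have norm_diff: "(norm (u - v))\<^sup>2 = (norm u)\<^sup>2 - 2 * inner u v + (norm v)\<^sup>2" for u v :: "real^'n^'n"
    by (simp add: power2_norm_eq_inner inner_diff_left inner_diff_right inner_commute[of v u])
  have "(norm ((a / N) *\<^sub>R P - (a / n) *\<^sub>R mat 1))\<^sup>2
      = (a / N)\<^sup>2 * (norm P)\<^sup>2 - 2 * (a / N) * (a / n) * N + (a / n)\<^sup>2 * n"
    unfolding norm_diff by (simp add: power_mult_distrib power_divide inner_P_1 norm_1)
  moreover have "(norm ((a / n) *\<^sub>R (mat 1 :: real^'n^'n)))\<^sup>2 = (a / n)\<^sup>2 * n"
    by (simp add: power_mult_distrib power_divide norm_1)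
  ultimately have "L\<^sup>2 = (n * (norm P)\<^sup>2 - N\<^sup>2) / N\<^sup>2"
    unfolding L_def power_divide using \<open>a \<noteq> 0\<close> \<open>n > 0\<close> \<open>N > 0\<close>
    by (simp add: field_simps power2_eq_square)
  then have "L = sqrt ((n * (norm P)\<^sup>2 - N\<^sup>2) / N\<^sup>2)"
    by (simp add: L_def flip: \<open>L\<^sup>2 = _\<close>)
  also have "\<dots> = sqrt (n * (norm P)\<^sup>2 - N\<^sup>2) / N"
    using \<open>N > 0\<close> by (simp add: real_sqrt_divide)
  finally show ?thesis
    by (simp only: L_def N_def n_def)
qed

lemma lora_relative_error_tendsto:
  fixes Y :: "real \<Rightarrow> real^'r^'n" and X :: "real \<Rightarrow> real^'n^'r" and U :: "real \<Rightarrow> real^'n^'n"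
  assumes "lora_flow W0 0 X0 Y X" and "full_flow W0 0 U" and "X0 \<noteq> 0" and "trace W0 \<noteq> 0"
  shows "((\<lambda>t. norm (Y t ** X t - U t) / norm (U t)) \<longlongrightarrow>
           sqrt (real CARD('n) * (norm (transpose X0 ** X0))\<^sup>2 - (norm X0) ^ 4) / (norm X0)\<^sup>2) at_top"
proof -
  have "trace (transpose X0 ** X0) > 0" and "(norm X0) ^ 4 = (trace (transpose X0 ** X0))\<^sup>2"
    using \<open>X0 \<noteq> 0\<close> by (simp_all add: trace_transpose_mult_self flip: power_mult)
  moreover have "norm ((trace W0 / real CARD('n)) *\<^sub>R (mat 1 :: real^'n^'n)) \<noteq> 0"
    using \<open>trace W0 \<noteq> 0\<close> norm_mat_1_power2[where 'n='n] by auto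
  ultimately show ?thesis
    using lora_flow_product_tendsto[OF assms(1,3)] full_flow_tendsto[OF assms(2)]
      relative_distance_to_identity[OF \<open>trace W0 \<noteq> 0\<close>, of "transpose X0 ** X0"]
    by (auto simp: trace_transpose_mult_self intro!: tendsto_eq_intros)
qed

section \<open>Gaussian vectors with independent coordinates\<close>

definition iid_normal :: "real \<Rightarrow> 'a::euclidean_space measure" where
  "iid_normal \<sigma> = density lborel (\<lambda>x. ennreal (\<Prod>b\<in>Basis. normal_density 0 \<sigma> (x \<bullet> b)))"

lemma sets_iid_normal [measurable_cong]: "sets (iid_normal \<sigma>) = sets borel"
  by (simp add: iid_normal_def)

lemma lborel_integral_prod_Basis:
  fixes g :: "'a::euclidean_space \<Rightarrow> real \<Rightarrow> real"
  assumes int: "\<And>b. b \<in> Basis \<Longrightarrow> integrable lborel (g b)"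
  shows "integrable lborel (\<lambda>x::'a. \<Prod>b\<in>Basis. g b (x \<bullet> b))"
    and "(\<integral>x. (\<Prod>b\<in>Basis. g b (x \<bullet> b)) \<partial>(lborel::'a measure)) = (\<Prod>b\<in>Basis. integral\<^sup>L lborel (g b))"
proof -
  interpret product_sigma_finite "\<lambda>_::'a. (lborel::real measure)"
    by standard
  have [measurable]: "b \<in> Basis \<Longrightarrow> g b \<in> borel_measurable borel" for b
    using int[of b] by (simp add: borel_measurable_integrable)
  have f_meas: "(\<lambda>x::'a. \<Prod>b\<in>Basis. g b (x \<bullet> b)) \<in> borel_measurable borel"
    by measurable
  have lborel_eq': "(lborel::'a measure) = distr (\<Pi>\<^sub>M b\<in>Basis. lborel) borel (\<lambda>f. \<Sum>b\<in>Basis. f b *\<^sub>R b)"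
    by (rule lborel_eq)
  have T[measurable]: "(\<lambda>f. \<Sum>b\<in>Basis. f b *\<^sub>R (b::'a)) \<in> measurable (\<Pi>\<^sub>M b\<in>Basis. lborel) borel"
    by measurable
  have coords: "(\<Sum>b'\<in>Basis. f b' *\<^sub>R b') \<bullet> b = f b" if "b \<in> Basis" for f :: "'a \<Rightarrow> real" and b
    using that by (simp add: inner_sum_left inner_Basis if_distrib cong: if_cong)
  have eq: "(\<lambda>f. \<Prod>b\<in>Basis. g b ((\<Sum>b'\<in>Basis. f b' *\<^sub>R b') \<bullet> b)) = (\<lambda>f. \<Prod>b\<in>Basis. g b (f b))"
    by (intro ext prod.cong refl) (simp add: coords)
  show "integrable lborel (\<lambda>x::'a. \<Prod>b\<in>Basis. g b (x \<bullet> b))"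
    unfolding lborel_eq' by (subst integrable_distr_eq[OF T f_meas]) (simp add: eq product_integrable_prod int)
  show "(\<integral>x. (\<Prod>b\<in>Basis. g b (x \<bullet> b)) \<partial>(lborel::'a measure)) = (\<Prod>b\<in>Basis. integral\<^sup>L lborel (g b))"
    unfolding lborel_eq' by (subst integral_distr[OF T f_meas]) (simp add: eq product_integral_prod int)
qed

lemma prob_space_iid_normal:
  assumes "\<sigma> > 0"
  shows "prob_space (iid_normal \<sigma> :: 'a::euclidean_space measure)"
proof
  have "integrable lborel (\<lambda>x::'a. \<Prod>b\<in>Basis. normal_density 0 \<sigma> (x \<bullet> b))"
    and "(\<integral>x. (\<Prod>b\<in>Basis. normal_density 0 \<sigma> (x \<bullet> b)) \<partial>(lborel::'a measure)) = 1"
    using lborel_integral_prod_Basis[of "\<lambda>_. normal_density 0 \<sigma>"] integrable_normal_moment[of \<sigma> 0 0]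
      \<open>\<sigma> > 0\<close> by simp_all
  then show "emeasure (iid_normal \<sigma>) (space (iid_normal \<sigma> :: 'a measure)) = 1"
    by (simp add: iid_normal_def emeasure_density nn_integral_eq_integral prod_nonneg)
qed

lemma iid_normal_monomial:
  fixes e :: "'a::euclidean_space \<Rightarrow> nat"
  assumes "\<sigma> > 0"
  shows "integrable (iid_normal \<sigma>) (\<lambda>x::'a. \<Prod>b\<in>Basis. (x \<bullet> b) ^ e b)"
    and "(\<integral>x. (\<Prod>b\<in>Basis. (x \<bullet> b) ^ e b) \<partial>iid_normal \<sigma>)
           = (\<Prod>b\<in>Basis. \<integral>y. normal_density 0 \<sigma> y * y ^ e b \<partial>lborel)"
proof -
  have density_times_monomial: "(\<Prod>b\<in>Basis. normal_density 0 \<sigma> (x \<bullet> b)) * (\<Prod>b\<in>Basis. (x \<bullet> b) ^ e b)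
      = (\<Prod>b\<in>Basis. normal_density 0 \<sigma> (x \<bullet> b) * (x \<bullet> b) ^ e b)" for x :: 'a
    by (simp add: prod.distrib)
  have moment_int: "integrable lborel (\<lambda>y. normal_density 0 \<sigma> y * y ^ k)" for k
    using integrable_normal_moment[OF \<open>\<sigma> > 0\<close>, of 0 k] by simp
  note prod_integral = lborel_integral_prod_Basis[of "\<lambda>b y. normal_density 0 \<sigma> y * y ^ e b", OF moment_int]
  show "integrable (iid_normal \<sigma>) (\<lambda>x::'a. \<Prod>b\<in>Basis. (x \<bullet> b) ^ e b)"
    unfolding iid_normal_def
    by (subst integrable_density) (auto simp: prod_nonneg density_times_monomial prod_integral)
  show "(\<integral>x. (\<Prod>b\<in>Basis. (x \<bullet> b) ^ e b) \<partial>iid_normal \<sigma>)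
      = (\<Prod>b\<in>Basis. \<integral>y. normal_density 0 \<sigma> y * y ^ e b \<partial>lborel)"
    unfolding iid_normal_def
    by (subst integral_density) (auto simp: prod_nonneg density_times_monomial prod_integral)
qed

lemma normal_moments:
  assumes "\<sigma> > 0"
  shows "(\<integral>y. normal_density 0 \<sigma> y * y ^ 0 \<partial>lborel) = 1"
    and "(\<integral>y. normal_density 0 \<sigma> y * y ^ 1 \<partial>lborel) = 0"
    and "(\<integral>y. normal_density 0 \<sigma> y * y ^ 2 \<partial>lborel) = \<sigma>\<^sup>2"
    and "(\<integral>y. normal_density 0 \<sigma> y * y ^ 4 \<partial>lborel) = 3 * \<sigma> ^ 4"
  using assms integral_normal_moment_odd[OF assms, of 0 0] integral_normal_moment_even[OF assms, of 0 1]
    integral_normal_moment_even[OF assms, of 0 2]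
  by (simp_all add: fact_numeral power2_eq_square power4_eq_xxxx field_simps)

lemma iid_normal_fourth_moment:
  assumes "\<sigma> > 0" and "b1 \<in> Basis" "b2 \<in> Basis" "b3 \<in> Basis" "b4 \<in> Basis"
  defines "e d \<equiv> of_bool (d = b1) + of_bool (d = b2) + of_bool (d = b3) + of_bool (d = b4)"
  shows "integrable (iid_normal \<sigma>) (\<lambda>x::'a::euclidean_space. (x \<bullet> b1) * (x \<bullet> b2) * (x \<bullet> b3) * (x \<bullet> b4))"
    and "(\<integral>x. (x \<bullet> b1) * (x \<bullet> b2) * (x \<bullet> b3) * (x \<bullet> b4) \<partial>iid_normal \<sigma>)
           = (\<Prod>d\<in>Basis. \<integral>y. normal_density 0 \<sigma> y * y ^ e d \<partial>lborel)"
proof -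
  have coordinate: "(\<Prod>d\<in>Basis. (x \<bullet> d) ^ of_bool (d = b)) = x \<bullet> b" if "b \<in> Basis" for x :: 'a and b
  proof -
    have "(x \<bullet> d) ^ of_bool (d = b) = (if d = b then x \<bullet> b else 1)" for d
      by simp
    then show ?thesis
      using that by simp
  qed
  have "(\<Prod>d\<in>Basis. (x \<bullet> d) ^ e d) = (x \<bullet> b1) * (x \<bullet> b2) * (x \<bullet> b3) * (x \<bullet> b4)" for x :: 'a
    using assms(2-5) by (simp add: e_def power_add prod.distrib coordinate)
  then show "integrable (iid_normal \<sigma>) (\<lambda>x::'a. (x \<bullet> b1) * (x \<bullet> b2) * (x \<bullet> b3) * (x \<bullet> b4))"
    and "(\<integral>x. (x \<bullet> b1) * (x \<bullet> b2) * (x \<bullet> b3) * (x \<bullet> b4) \<partial>iid_normal \<sigma>)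
           = (\<Prod>d\<in>Basis. \<integral>y. normal_density 0 \<sigma> y * y ^ e d \<partial>lborel)"
    using iid_normal_monomial[OF \<open>\<sigma> > 0\<close>, of e] by simp_all
qed

lemma iid_normal_fourth_moment_unpaired:
  assumes "\<sigma> > 0" and "b1 \<in> Basis" "b2 \<in> Basis" "b3 \<in> Basis" "b4 \<in> Basis"
    and "b1 \<noteq> b2" "b1 \<noteq> b3" "b1 \<noteq> b4"
  shows "(\<integral>x. (x \<bullet> b1) * (x \<bullet> b2) * (x \<bullet> b3) * (x \<bullet> b4) \<partial>iid_normal \<sigma>) = (0::real)"
  unfolding iid_normal_fourth_moment(2)[OF assms(1-5)]
  by (rule prod_zero) (use assms normal_moments(2)[OF \<open>\<sigma> > 0\<close>] in auto)

lemma iid_normal_moment_squares: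
  assumes "\<sigma> > 0" and "b \<in> Basis" "c \<in> Basis"
  shows "integrable (iid_normal \<sigma>) (\<lambda>x::'a::euclidean_space. (x \<bullet> b)\<^sup>2 * (x \<bullet> c)\<^sup>2)"
    and "(\<integral>x. (x \<bullet> b)\<^sup>2 * (x \<bullet> c)\<^sup>2 \<partial>iid_normal \<sigma>) = (if b = c then 3 else 1) * \<sigma> ^ 4"
proof -
  have squares: "(x \<bullet> b)\<^sup>2 * (x \<bullet> c)\<^sup>2 = (x \<bullet> b) * (x \<bullet> b) * (x \<bullet> c) * (x \<bullet> c)" for x :: 'a
    by (simp add: power2_eq_square)
  note moment = iid_normal_fourth_moment[OF assms(1,2,2,3,3)]
  show "integrable (iid_normal \<sigma>) (\<lambda>x::'a. (x \<bullet> b)\<^sup>2 * (x \<bullet> c)\<^sup>2)"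
    unfolding squares by (fact moment(1))
  let ?m = "\<lambda>k. \<integral>y. normal_density 0 \<sigma> y * y ^ k \<partial>lborel"
  let ?e = "\<lambda>d. of_bool (d = b) + of_bool (d = b) + of_bool (d = c) + of_bool (d = c) :: nat"
  have "(\<Prod>d\<in>Basis. ?m (?e d)) = (\<Prod>d\<in>{b, c}. ?m (?e d))"
    by (rule prod.mono_neutral_right) (use assms normal_moments(1)[OF \<open>\<sigma> > 0\<close>] in auto)
  also have "\<dots> = (if b = c then 3 else 1) * \<sigma> ^ 4"
  proof (cases "b = c")
    case True
    then show ?thesis
      using normal_moments(4)[OF \<open>\<sigma> > 0\<close>] by (simp add: numeral_eq_Suc)
  next
    case False
    then show ?thesis
      using normal_moments(3)[OF \<open>\<sigma> > 0\<close>] by (simp add: numeral_Bit0 power_add)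
  qed
  finally show "(\<integral>x. (x \<bullet> b)\<^sup>2 * (x \<bullet> c)\<^sup>2 \<partial>iid_normal \<sigma>) = (if b = c then 3 else 1) * \<sigma> ^ 4"
    unfolding squares moment(2) .
qed

lemma norm_power4_eq_sum_Basis:
  "(norm (x::'a::euclidean_space)) ^ 4 = (\<Sum>b\<in>Basis. \<Sum>c\<in>Basis. (x \<bullet> b)\<^sup>2 * (x \<bullet> c)\<^sup>2)"
proof -
  have "(norm x) ^ 4 = ((norm x)\<^sup>2)\<^sup>2"
    by (simp add: power4_eq_xxxx power2_eq_square)
  also have "\<dots> = (\<Sum>b\<in>Basis. (x \<bullet> b)\<^sup>2) * (\<Sum>c\<in>Basis. (x \<bullet> c)\<^sup>2)"
    unfolding power2_norm_eq_inner euclidean_inner[of x x] by (simp add: power2_eq_square)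
  also have "\<dots> = (\<Sum>b\<in>Basis. \<Sum>c\<in>Basis. (x \<bullet> b)\<^sup>2 * (x \<bullet> c)\<^sup>2)"
    by (rule sum_product)
  finally show ?thesis .
qed

lemma iid_normal_norm_power4:
  fixes \<sigma> :: real
  assumes "\<sigma> > 0"
  shows "integrable (iid_normal \<sigma>) (\<lambda>x::'a::euclidean_space. (norm x) ^ 4)"
    and "(\<integral>x. (norm (x::'a)) ^ 4 \<partial>iid_normal \<sigma>) = real DIM('a) * (real DIM('a) + 2) * \<sigma> ^ 4"
proof -
  note moment = iid_normal_moment_squares[OF \<open>\<sigma> > 0\<close>]
  show "integrable (iid_normal \<sigma>) (\<lambda>x::'a. (norm x) ^ 4)"
    unfolding norm_power4_eq_sum_Basis by (intro Bochner_Integration.integrable_sum moment(1))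
  have row: "(\<Sum>c\<in>Basis. (if b = c then 3 else 1) * \<sigma> ^ 4) = (real DIM('a) + 2) * \<sigma> ^ 4"
    if "b \<in> (Basis::'a set)" for b
  proof -
    have "(\<Sum>c\<in>Basis. (if b = c then 3 else 1) * \<sigma> ^ 4)
        = (\<Sum>c\<in>(Basis::'a set). \<sigma> ^ 4 + (if c = b then 2 * \<sigma> ^ 4 else 0))"
      by (intro sum.cong) auto
    also have "\<dots> = (real DIM('a) + 2) * \<sigma> ^ 4"
      using that by (simp add: sum.distrib algebra_simps)
    finally show ?thesis .
  qed
  have "(\<integral>x. (norm (x::'a)) ^ 4 \<partial>iid_normal \<sigma>)
      = (\<Sum>b\<in>(Basis::'a set). \<Sum>c\<in>Basis. \<integral>x. (x \<bullet> b)\<^sup>2 * (x \<bullet> c)\<^sup>2 \<partial>iid_normal \<sigma>)"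
    unfolding norm_power4_eq_sum_Basis
    by (simp add: Bochner_Integration.integral_sum moment(1))
  also have "\<dots> = (\<Sum>b\<in>(Basis::'a set). (real DIM('a) + 2) * \<sigma> ^ 4)"
  proof (intro sum.cong refl)
    fix b :: 'a
    assume "b \<in> Basis"
    then have "(\<Sum>c\<in>Basis. \<integral>x. (x \<bullet> b)\<^sup>2 * (x \<bullet> c)\<^sup>2 \<partial>iid_normal \<sigma>)
        = (\<Sum>c\<in>Basis. (if b = c then 3 else 1) * \<sigma> ^ 4)"
      by (intro sum.cong refl moment(2))
    then show "(\<Sum>c\<in>Basis. \<integral>x. (x \<bullet> b)\<^sup>2 * (x \<bullet> c)\<^sup>2 \<partial>iid_normal \<sigma>) = (real DIM('a) + 2) * \<sigma> ^ 4"
      using row[OF \<open>b \<in> Basis\<close>] by simp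
  qed
  finally show "(\<integral>x. (norm (x::'a)) ^ 4 \<partial>iid_normal \<sigma>) = real DIM('a) * (real DIM('a) + 2) * \<sigma> ^ 4"
    by simp
qed

lemma normal_density_times_gaussian:
  assumes "\<sigma> > 0" and "t \<ge> 0"
  defines "s \<equiv> \<sigma> / sqrt (1 + 2 * t * \<sigma>\<^sup>2)"
  shows "normal_density 0 \<sigma> y * exp (- t * y\<^sup>2) = (s / \<sigma>) * normal_density 0 s y"
proof -
  have q: "1 + 2 * t * \<sigma>\<^sup>2 > 0"
    using assms by (simp add: add_pos_nonneg)
  then have "s > 0"
    using \<open>\<sigma> > 0\<close> by (simp add: s_def)
  have "- y\<^sup>2 / (2 * \<sigma>\<^sup>2) + - t * y\<^sup>2 = - y\<^sup>2 / (2 * (\<sigma>\<^sup>2 / (1 + 2 * t * \<sigma>\<^sup>2)))"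
    using \<open>\<sigma> > 0\<close> q by (simp add: field_simps)
  also have "\<sigma>\<^sup>2 / (1 + 2 * t * \<sigma>\<^sup>2) = s\<^sup>2"
    using q by (simp add: s_def power_divide)
  finally have exponent: "- y\<^sup>2 / (2 * \<sigma>\<^sup>2) + - t * y\<^sup>2 = - y\<^sup>2 / (2 * s\<^sup>2)" .
  have "normal_density 0 \<sigma> y * exp (- t * y\<^sup>2) = exp (- y\<^sup>2 / (2 * s\<^sup>2)) / (sqrt (2 * pi) * \<sigma>)"
  proof -
    have "exp (- (y\<^sup>2 / (2 * \<sigma>\<^sup>2))) * exp (- (t * y\<^sup>2)) = exp (- (y\<^sup>2 / (2 * s\<^sup>2)))"
      by (subst exp_add[symmetric]) (use exponent in simp)
    then show ?thesis
      using \<open>\<sigma> > 0\<close> by (simp add: normal_density_def real_sqrt_mult)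
  qed
  also have "\<dots> = (s / \<sigma>) * normal_density 0 s y"
    using \<open>\<sigma> > 0\<close> \<open>s > 0\<close> by (simp add: normal_density_def real_sqrt_mult)
  finally show ?thesis .
qed

lemma nn_integral_iid_normal_gaussian_weight:
  fixes f :: "'a::euclidean_space \<Rightarrow> ennreal"
  assumes "\<sigma> > 0" and "t \<ge> 0" and [measurable]: "f \<in> borel_measurable borel"
  defines "s \<equiv> \<sigma> / sqrt (1 + 2 * t * \<sigma>\<^sup>2)"
  shows "(\<integral>\<^sup>+x. ennreal (exp (- t * (norm x)\<^sup>2)) * f x \<partial>iid_normal \<sigma>)
           = ennreal ((s / \<sigma>) ^ DIM('a)) * (\<integral>\<^sup>+x. f x \<partial>iid_normal s)"
proof -
  have "s > 0"
    using assms by (simp add: s_def add_pos_nonneg)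
  have weight: "(\<Prod>b\<in>Basis. normal_density 0 \<sigma> (x \<bullet> b)) * exp (- t * (norm x)\<^sup>2)
      = (s / \<sigma>) ^ DIM('a) * (\<Prod>b\<in>Basis. normal_density 0 s (x \<bullet> b))" for x :: 'a
  proof -
    have "(norm x)\<^sup>2 = (\<Sum>b\<in>Basis. (x \<bullet> b)\<^sup>2)"
      unfolding power2_norm_eq_inner euclidean_inner[of x x] by (simp add: power2_eq_square)
    then have "exp (- t * (norm x)\<^sup>2) = (\<Prod>b\<in>Basis. exp (- t * (x \<bullet> b)\<^sup>2))"
      by (simp add: sum_distrib_left exp_sum)
    then have "(\<Prod>b\<in>Basis. normal_density 0 \<sigma> (x \<bullet> b)) * exp (- t * (norm x)\<^sup>2)
        = (\<Prod>b\<in>Basis. normal_density 0 \<sigma> (x \<bullet> b) * exp (- t * (x \<bullet> b)\<^sup>2))"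
      by (simp add: prod.distrib)
    also have "\<dots> = (\<Prod>b\<in>Basis. (s / \<sigma>) * normal_density 0 s (x \<bullet> b))"
      unfolding s_def normal_density_times_gaussian[OF assms(1,2)] ..
    also have "\<dots> = (s / \<sigma>) ^ DIM('a) * (\<Prod>b\<in>Basis. normal_density 0 s (x \<bullet> b))"
      by (simp only: prod.distrib prod_constant)
    finally show ?thesis .
  qed
  have pointwise: "ennreal (\<Prod>b\<in>Basis. normal_density 0 \<sigma> (x \<bullet> b)) * (ennreal (exp (- t * (norm x)\<^sup>2)) * f x)
      = ennreal ((s / \<sigma>) ^ DIM('a)) * (ennreal (\<Prod>b\<in>Basis. normal_density 0 s (x \<bullet> b)) * f x)" for x :: 'a
    using \<open>\<sigma> > 0\<close> \<open>s > 0\<close> weight[of x]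
    by (simp add: mult.assoc[symmetric] prod_nonneg flip: ennreal_mult)
  have "(\<integral>\<^sup>+x. ennreal (exp (- t * (norm x)\<^sup>2)) * f x \<partial>iid_normal \<sigma>)
      = (\<integral>\<^sup>+x. ennreal (\<Prod>b\<in>Basis. normal_density 0 \<sigma> (x \<bullet> b))
          * (ennreal (exp (- t * (norm x)\<^sup>2)) * f x) \<partial>lborel)"
    unfolding iid_normal_def by (rule nn_integral_density) measurable
  also have "\<dots> = (\<integral>\<^sup>+x. ennreal ((s / \<sigma>) ^ DIM('a))
      * (ennreal (\<Prod>b\<in>Basis. normal_density 0 s (x \<bullet> b)) * f x) \<partial>lborel)"
    by (simp only: pointwise)
  also have "\<dots> = ennreal ((s / \<sigma>) ^ DIM('a))
      * (\<integral>\<^sup>+x. ennreal (\<Prod>b\<in>Basis. normal_density 0 s (x \<bullet> b)) * f x \<partial>lborel)"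
    by (rule nn_integral_cmult) measurable
  also have "\<dots> = ennreal ((s / \<sigma>) ^ DIM('a)) * (\<integral>\<^sup>+x. f x \<partial>iid_normal s)"
    unfolding iid_normal_def by (subst nn_integral_density) simp_all
  finally show ?thesis .
qed

lemma nn_integral_linear_times_exp:
  assumes "x > 0"
  shows "(\<integral>\<^sup>+t. ennreal (t * exp (- t * x)) * indicator {0..} t \<partial>lborel) = ennreal (1 / x\<^sup>2)"
proof -
  have "(\<integral>\<^sup>+t. ennreal (t * exp (- t * x)) * indicator {0..} t \<partial>lborel)
      = (\<integral>\<^sup>+t. ennreal (1 / x) * ennreal (erlang_density 0 x t * t ^ 1) \<partial>lborel)"
    using \<open>x > 0\<close>
    by (intro nn_integral_cong) (auto simp: erlang_density_def indicator_def mult_ac simp flip: ennreal_mult)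
  also have "\<dots> = ennreal (1 / x) * ennreal (1 / x)"
    using nn_integral_erlang_ith_moment[OF \<open>x > 0\<close>, of 0 1] by (simp add: nn_integral_cmult)
  also have "\<dots> = ennreal (1 / x\<^sup>2)"
    using \<open>x > 0\<close> by (simp add: power2_eq_square flip: ennreal_mult)
  finally show ?thesis .
qed

lemma AE_iid_normal_nonzero: "AE x in iid_normal \<sigma>. (x::'a::euclidean_space) \<noteq> 0"
proof -
  have "AE x in lborel. (x::'a) \<noteq> 0"
    by (rule AE_lborel_singleton)
  then show ?thesis
    unfolding iid_normal_def by (subst AE_density) auto
qed

lemma nn_integral_iid_normal_div_norm_power4:
  fixes f :: "'a::euclidean_space \<Rightarrow> real"
  assumes "\<sigma> > 0" and f_meas [measurable]: "f \<in> borel_measurable borel" and f_nonneg: "\<And>x. f x \<ge> 0"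
  defines "s \<equiv> \<lambda>t. \<sigma> / sqrt (1 + 2 * t * \<sigma>\<^sup>2)"
  shows "(\<integral>\<^sup>+x. ennreal (f x / (norm x) ^ 4) \<partial>iid_normal \<sigma>)
    = (\<integral>\<^sup>+t. ennreal (t * (s t / \<sigma>) ^ DIM('a)) * (\<integral>\<^sup>+x. ennreal (f x) \<partial>iid_normal (s t))
        * indicator {0..} t \<partial>lborel)"
proof -
  interpret prob_space "iid_normal \<sigma> :: 'a measure"
    by (rule prob_space_iid_normal[OF \<open>\<sigma> > 0\<close>])
  interpret pair_sigma_finite "iid_normal \<sigma> :: 'a measure" "lborel :: real measure"
    by (intro pair_sigma_finite.intro sigma_finite_measure_axioms sigma_finite_lborel)
  define F where "F x t = ennreal (f x) * (ennreal (t * exp (- t * (norm x)\<^sup>2)) * indicator {0..} t)"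
    for x :: 'a and t :: real
  have "(\<integral>\<^sup>+x. ennreal (f x / (norm x) ^ 4) \<partial>iid_normal \<sigma>) = (\<integral>\<^sup>+x. (\<integral>\<^sup>+t. F x t \<partial>lborel) \<partial>iid_normal \<sigma>)"
  proof (rule nn_integral_cong_AE)
    show "AE x in iid_normal \<sigma>. ennreal (f x / (norm x) ^ 4) = (\<integral>\<^sup>+t. F x t \<partial>lborel)"
      using AE_iid_normal_nonzero
    proof (rule AE_mp, intro AE_I2 impI)
      fix x :: 'a
      assume "x \<noteq> 0"
      have "(\<integral>\<^sup>+t. F x t \<partial>lborel)
          = ennreal (f x) * (\<integral>\<^sup>+t. ennreal (t * exp (- t * (norm x)\<^sup>2)) * indicator {0..} t \<partial>lborel)"
        unfolding F_def by (rule nn_integral_cmult) measurable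
      also have "\<dots> = ennreal (f x) * ennreal (1 / ((norm x)\<^sup>2)\<^sup>2)"
        using \<open>x \<noteq> 0\<close> by (subst nn_integral_linear_times_exp) simp_all
      also have "\<dots> = ennreal (f x / (norm x) ^ 4)"
        using f_nonneg[of x] by (simp add: ennreal_mult[symmetric] divide_inverse flip: power_mult)
      finally show "ennreal (f x / (norm x) ^ 4) = (\<integral>\<^sup>+t. F x t \<partial>lborel)" ..
    qed
  qed
  also have "\<dots> = (\<integral>\<^sup>+t. (\<integral>\<^sup>+x. F x t \<partial>iid_normal \<sigma>) \<partial>lborel)"
    by (rule Fubini'[symmetric]) (simp add: F_def)
  also have "\<dots> = (\<integral>\<^sup>+t. ennreal (t * (s t / \<sigma>) ^ DIM('a)) * (\<integral>\<^sup>+x. ennreal (f x) \<partial>iid_normal (s t))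
      * indicator {0..} t \<partial>lborel)"
  proof (rule nn_integral_cong)
    fix t :: real
    show "(\<integral>\<^sup>+x. F x t \<partial>iid_normal \<sigma>) = ennreal (t * (s t / \<sigma>) ^ DIM('a))
        * (\<integral>\<^sup>+x. ennreal (f x) \<partial>iid_normal (s t)) * indicator {0..} t"
    proof (cases "t \<ge> 0")
      case True
      have "(\<integral>\<^sup>+x. F x t \<partial>iid_normal \<sigma>)
          = ennreal t * (\<integral>\<^sup>+x. ennreal (exp (- t * (norm x)\<^sup>2)) * ennreal (f x) \<partial>iid_normal \<sigma>)"
        using True by (subst nn_integral_cmult[symmetric])
          (auto simp: F_def ennreal_mult mult_ac intro!: nn_integral_cong)
      also have "\<dots> = ennreal t * (ennreal ((s t / \<sigma>) ^ DIM('a)) * (\<integral>\<^sup>+x. ennreal (f x) \<partial>iid_normal (s t)))"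
        using nn_integral_iid_normal_gaussian_weight[OF \<open>\<sigma> > 0\<close> True, of "\<lambda>x. ennreal (f x)"]
        by (simp add: s_def)
      finally show ?thesis
        using True \<open>\<sigma> > 0\<close> by (simp add: ennreal_mult mult_ac s_def)
    qed (simp add: F_def)
  qed
  finally show ?thesis .
qed

lemma iid_normal_expectation_div_norm_power4:
  fixes f :: "'a::euclidean_space \<Rightarrow> real" and \<sigma> \<kappa> :: real
  assumes "\<sigma> > 0" and f_meas [measurable]: "f \<in> borel_measurable borel" and f_nonneg: "\<And>x. f x \<ge> 0"
    and f_int: "\<And>s. s > 0 \<Longrightarrow> integrable (iid_normal s) f"
    and f_expectation: "\<And>s. s > 0 \<Longrightarrow> integral\<^sup>L (iid_normal s) f = \<kappa> * (\<integral>x. (norm (x::'a)) ^ 4 \<partial>iid_normal s)"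
  shows "integrable (iid_normal \<sigma>) (\<lambda>x. f x / (norm x) ^ 4)"
    and "(\<integral>x. f x / (norm x) ^ 4 \<partial>iid_normal \<sigma>) = \<kappa>"
proof -
  interpret prob_space "iid_normal \<sigma> :: 'a measure"
    by (rule prob_space_iid_normal[OF \<open>\<sigma> > 0\<close>])
  note norm4 = iid_normal_norm_power4[where 'a='a]
  have "\<kappa> \<ge> 0"
  proof -
    have "0 \<le> integral\<^sup>L (iid_normal \<sigma>) f"
      using f_nonneg by simp
    moreover have "(\<integral>x. (norm (x::'a)) ^ 4 \<partial>iid_normal \<sigma>) > 0"
      using \<open>\<sigma> > 0\<close> by (simp add: norm4(2))
    ultimately show ?thesis
      using f_expectation[OF \<open>\<sigma> > 0\<close>] by (simp add: zero_le_mult_iff)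
  qed
  have nn_f: "(\<integral>\<^sup>+x. ennreal (f x) \<partial>iid_normal s) = (\<integral>\<^sup>+x. ennreal (\<kappa> * (norm (x::'a)) ^ 4) \<partial>iid_normal s)"
    if "s > 0" for s
    using \<open>\<kappa> \<ge> 0\<close> f_nonneg norm4[OF that]
    by (simp add: nn_integral_eq_integral f_int[OF that] f_expectation[OF that])
  have g_meas: "(\<lambda>x::'a. \<kappa> * (norm x) ^ 4) \<in> borel_measurable borel"
    by measurable
  have g_nonneg: "\<kappa> * (norm (x::'a)) ^ 4 \<ge> 0" for x
    using \<open>\<kappa> \<ge> 0\<close> by simp
  have "(\<integral>\<^sup>+x. ennreal (f x / (norm x) ^ 4) \<partial>iid_normal \<sigma>)
      = (\<integral>\<^sup>+x. ennreal (\<kappa> * (norm (x::'a)) ^ 4 / (norm x) ^ 4) \<partial>iid_normal \<sigma>)"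
    unfolding nn_integral_iid_normal_div_norm_power4[OF \<open>\<sigma> > 0\<close> f_meas f_nonneg]
      nn_integral_iid_normal_div_norm_power4[OF \<open>\<sigma> > 0\<close>, of "\<lambda>x. \<kappa> * (norm x) ^ 4", OF g_meas g_nonneg]
    using \<open>\<kappa> \<ge> 0\<close> \<open>\<sigma> > 0\<close>
    by (intro nn_integral_cong) (simp add: nn_f add_pos_nonneg split: split_indicator)
  also have "\<dots> = (\<integral>\<^sup>+x. ennreal \<kappa> \<partial>(iid_normal \<sigma> :: 'a measure))"
    by (rule nn_integral_cong_AE, rule AE_mp[OF AE_iid_normal_nonzero]) auto
  finally have nn_ratio: "(\<integral>\<^sup>+x. ennreal (f x / (norm x) ^ 4) \<partial>iid_normal \<sigma>) = ennreal \<kappa>"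
    by (simp add: emeasure_space_1)
  show "integrable (iid_normal \<sigma>) (\<lambda>x. f x / (norm x) ^ 4)"
    by (rule integrableI_nonneg) (auto simp: nn_ratio f_nonneg)
  show "(\<integral>x. f x / (norm x) ^ 4 \<partial>iid_normal \<sigma>) = \<kappa>"
    by (subst integral_eq_nn_integral) (auto simp: nn_ratio f_nonneg \<open>\<kappa> \<ge> 0\<close>)
qed

section \<open>Gaussian matrices\<close>

lemma inner_axis_axis_matrix: "(X::real^'n^'r) \<bullet> axis i (axis j 1) = X $ i $ j"
  by (simp add: inner_axis)

lemma Basis_matrix: "(Basis :: (real^'n^'r) set) = (\<lambda>(i, j). axis i (axis j 1)) ` UNIV"
  by (auto simp: Basis_vec_def)

lemma axis_axis_eq_iff: "axis i (axis j (1::real)) = axis k (axis l 1) \<longleftrightarrow> i = k \<and> j = l"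
  by (auto simp: axis_eq_axis)

lemma prod_Basis_matrix:
  "(\<Prod>b\<in>(Basis :: (real^'n^'r) set). g b) = (\<Prod>i\<in>UNIV. \<Prod>j\<in>UNIV. g (axis i (axis j 1)))"
proof -
  have "inj (\<lambda>(i::'r, j::'n). axis i (axis j (1::real)))"
    by (auto simp: inj_def axis_axis_eq_iff)
  then show ?thesis
    unfolding Basis_matrix prod.reindex[OF \<open>inj _\<close>] by (simp add: prod.cartesian_product split_def)
qed

lemma gauss_matrix_eq_iid_normal: "gauss_matrix \<sigma> = (iid_normal \<sigma> :: (real^'n^'r) measure)"
  by (simp add: gauss_matrix_def iid_normal_def prod_Basis_matrix inner_axis_axis_matrix)

lemma sets_gauss_matrix [measurable_cong]: "sets (gauss_matrix \<sigma> :: (real^'n^'r) measure) = sets borel"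
  by (simp add: gauss_matrix_eq_iid_normal sets_iid_normal)

lemma norm_transpose_mult_self_power2:
  "(norm (transpose X ** X))\<^sup>2
     = (\<Sum>j\<in>UNIV. \<Sum>l\<in>UNIV. \<Sum>i\<in>UNIV. \<Sum>k\<in>UNIV. X $ i $ j * X $ i $ l * X $ k $ j * X $ k $ l)"
  for X :: "real^'n^'r"
  unfolding norm_matrix_power2
  by (simp add: matrix_matrix_mult_nth transpose_nth power2_eq_square sum_product mult.assoc)

lemma borel_measurable_matrix_nth [measurable]:
  "(\<lambda>X::real^'n^'r. X $ i $ j) \<in> borel_measurable borel"
  unfolding inner_axis_axis_matrix[symmetric] by measurable

lemma borel_measurable_norm_transpose_mult_self_power2 [measurable]:
  "(\<lambda>X::real^'n^'r. (norm (transpose X ** X))\<^sup>2) \<in> borel_measurable borel"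
  unfolding norm_transpose_mult_self_power2 by measurable

lemma iid_normal_matrix_fourth_moment:
  fixes \<sigma> :: real
  assumes "\<sigma> > 0"
  shows "integrable (iid_normal \<sigma>) (\<lambda>X::real^'n^'r. X $ i $ j * X $ i $ l * X $ k $ j * X $ k $ l)"
    and "(\<integral>X. X $ i $ j * X $ i $ l * X $ k $ j * X $ k $ l \<partial>(iid_normal \<sigma> :: (real^'n^'r) measure))
           = (if i = k then \<sigma> ^ 4 else 0) + (if j = l then \<sigma> ^ 4 else 0) + (if i = k \<and> j = l then \<sigma> ^ 4 else 0)"
proof -
  let ?e = "\<lambda>i j. axis i (axis j 1) :: real^'n^'r"
  have e: "?e i j \<in> Basis" for i j
    by simp
  have entries: "X $ i $ j * X $ i $ l * X $ k $ j * X $ k $ l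
      = (X \<bullet> ?e i j) * (X \<bullet> ?e i l) * (X \<bullet> ?e k j) * (X \<bullet> ?e k l)" for X :: "real^'n^'r"
    by (simp add: inner_axis_axis_matrix)
  show "integrable (iid_normal \<sigma>) (\<lambda>X::real^'n^'r. X $ i $ j * X $ i $ l * X $ k $ j * X $ k $ l)"
    unfolding entries by (rule iid_normal_fourth_moment(1)[OF assms e e e e])
  consider "i = k" | "i \<noteq> k" "j = l" | "i \<noteq> k" "j \<noteq> l"
    by blast
  then show "(\<integral>X. X $ i $ j * X $ i $ l * X $ k $ j * X $ k $ l \<partial>(iid_normal \<sigma> :: (real^'n^'r) measure))
      = (if i = k then \<sigma> ^ 4 else 0) + (if j = l then \<sigma> ^ 4 else 0) + (if i = k \<and> j = l then \<sigma> ^ 4 else 0)"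
  proof cases
    case 1
    then have "X $ i $ j * X $ i $ l * X $ k $ j * X $ k $ l = (X \<bullet> ?e i j)\<^sup>2 * (X \<bullet> ?e i l)\<^sup>2"
      for X :: "real^'n^'r"
      by (simp add: inner_axis_axis_matrix power2_eq_square mult_ac)
    with 1 show ?thesis
      by (simp add: iid_normal_moment_squares(2)[OF assms e e] axis_axis_eq_iff)
  next
    case 2
    then have "X $ i $ j * X $ i $ l * X $ k $ j * X $ k $ l = (X \<bullet> ?e i j)\<^sup>2 * (X \<bullet> ?e k j)\<^sup>2"
      for X :: "real^'n^'r"
      by (simp add: inner_axis_axis_matrix power2_eq_square mult_ac)
    with 2 show ?thesis
      by (simp add: iid_normal_moment_squares(2)[OF assms e e] axis_axis_eq_iff)
  next
    case 3
    then show ?thesis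
      unfolding entries
      by (simp add: iid_normal_fourth_moment_unpaired[OF assms e e e e] axis_axis_eq_iff)
  qed
qed

lemma iid_normal_norm_transpose_mult_self_power2:
  fixes \<sigma> :: real
  assumes "\<sigma> > 0"
  shows "integrable (iid_normal \<sigma>) (\<lambda>X::real^'n^'r. (norm (transpose X ** X))\<^sup>2)"
    and "(\<integral>X. (norm (transpose X ** X))\<^sup>2 \<partial>(iid_normal \<sigma> :: (real^'n^'r) measure))
           = real CARD('r) * real CARD('n) * (real CARD('n) + real CARD('r) + 1) * \<sigma> ^ 4"
proof -
  note moment = iid_normal_matrix_fourth_moment[OF assms]
  show "integrable (iid_normal \<sigma>) (\<lambda>X::real^'n^'r. (norm (transpose X ** X))\<^sup>2)"
    unfolding norm_transpose_mult_self_power2 by (intro Bochner_Integration.integrable_sum moment(1))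
  have "(\<integral>X. (norm (transpose X ** X))\<^sup>2 \<partial>(iid_normal \<sigma> :: (real^'n^'r) measure))
      = (\<Sum>j\<in>(UNIV::'n set). \<Sum>l\<in>(UNIV::'n set). \<Sum>i\<in>(UNIV::'r set). \<Sum>k\<in>(UNIV::'r set).
          (if i = k then \<sigma> ^ 4 else 0) + (if j = l then \<sigma> ^ 4 else 0) + (if i = k \<and> j = l then \<sigma> ^ 4 else 0))"
    unfolding norm_transpose_mult_self_power2
    by (simp add: Bochner_Integration.integral_sum moment)
  also have "\<dots> = real CARD('r) * real CARD('n) * (real CARD('n) + real CARD('r) + 1) * \<sigma> ^ 4"
    by (simp add: sum.distrib if_if_eq_conj[symmetric] algebra_simps
        flip: sum_distrib_left)
  finally show "(\<integral>X. (norm (transpose X ** X))\<^sup>2 \<partial>(iid_normal \<sigma> :: (real^'n^'r) measure))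
      = real CARD('r) * real CARD('n) * (real CARD('n) + real CARD('r) + 1) * \<sigma> ^ 4" .
qed

lemma iid_normal_expectation_gram_ratio:
  fixes \<sigma> :: real
  assumes "\<sigma> > 0"
  defines "\<kappa> \<equiv> (real CARD('n) + real CARD('r) + 1) / (real CARD('r) * real CARD('n) + 2)"
  shows "integrable (iid_normal \<sigma>) (\<lambda>X::real^'n^'r. (norm (transpose X ** X))\<^sup>2 / (norm X) ^ 4)"
    and "(\<integral>X. (norm (transpose X ** X))\<^sup>2 / (norm X) ^ 4 \<partial>(iid_normal \<sigma> :: (real^'n^'r) measure)) = \<kappa>"
proof -
  have expectation_ratio: "(\<integral>X. (norm (transpose X ** X))\<^sup>2 \<partial>(iid_normal s :: (real^'n^'r) measure))
      = \<kappa> * (\<integral>X. (norm (X::real^'n^'r)) ^ 4 \<partial>iid_normal s)" if "s > 0" for s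
  proof -
    have "real CARD('r) * real CARD('n) + 2 > 0"
      by (intro add_nonneg_pos) simp_all
    then show ?thesis
      unfolding iid_normal_norm_transpose_mult_self_power2(2)[OF that] iid_normal_norm_power4(2)[OF that]
      by (simp add: \<kappa>_def field_simps)
  qed
  note ratio = iid_normal_expectation_div_norm_power4[OF \<open>\<sigma> > 0\<close>
      borel_measurable_norm_transpose_mult_self_power2 zero_le_power2
      iid_normal_norm_transpose_mult_self_power2(1) expectation_ratio]
  show "integrable (iid_normal \<sigma>) (\<lambda>X::real^'n^'r. (norm (transpose X ** X))\<^sup>2 / (norm X) ^ 4)"
    using ratio(1) by simp
  show "(\<integral>X. (norm (transpose X ** X))\<^sup>2 / (norm X) ^ 4 \<partial>(iid_normal \<sigma> :: (real^'n^'r) measure)) = \<kappa>"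
    using ratio(2) by simp
qed

section \<open>The expected relative error\<close>

lemma (in prob_space) expectation_le_sqrt_expectation_power2:
  fixes f :: "'a \<Rightarrow> real"
  assumes [measurable]: "f \<in> borel_measurable M" and "integrable M (\<lambda>x. (f x)\<^sup>2)"
  shows "integrable M f" and "expectation f \<le> sqrt (expectation (\<lambda>x. (f x)\<^sup>2))"
proof -
  show "integrable M f"
    using assms by (rule square_integrable_imp_integrable)
  then have "(expectation f)\<^sup>2 \<le> expectation (\<lambda>x. (f x)\<^sup>2)"
    using variance_positive[of f] variance_eq[of f] assms(2) by simp
  then show "expectation f \<le> sqrt (expectation (\<lambda>x. (f x)\<^sup>2))"
    using real_sqrt_le_mono real_sqrt_abs abs_ge_self order_trans by metis
qed

lemma lora_relative_error_Lim:
  fixes Y :: "real \<Rightarrow> real^'r^'n" and X :: "real \<Rightarrow> real^'n^'r" and U :: "real \<Rightarrow> real^'n^'n"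
  assumes "lora_flow W0 0 X0 Y X" and "full_flow W0 0 U" and "X0 \<noteq> 0" and "trace W0 \<noteq> 0"
  defines "\<rho> \<equiv> sqrt (real CARD('n) * (norm (transpose X0 ** X0))\<^sup>2 - (norm X0) ^ 4) / (norm X0)\<^sup>2"
  shows "Lim at_top (\<lambda>t. norm (Y t ** X t - U t) / norm (U t)) = \<rho>"
    and "Lim at_top (\<lambda>t. (norm (Y t ** X t - U t))\<^sup>2 / (norm (U t))\<^sup>2) = \<rho>\<^sup>2"
    and "\<rho> \<ge> 0"
    and "\<rho>\<^sup>2 = real CARD('n) * ((norm (transpose X0 ** X0))\<^sup>2 / (norm X0) ^ 4) - 1"
proof -
  note limit = lora_relative_error_tendsto[OF assms(1-4), folded \<rho>_def]
  show "Lim at_top (\<lambda>t. norm (Y t ** X t - U t) / norm (U t)) = \<rho>"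
    by (rule tendsto_Lim[OF trivial_limit_at_top_linorder limit])
  show "Lim at_top (\<lambda>t. (norm (Y t ** X t - U t))\<^sup>2 / (norm (U t))\<^sup>2) = \<rho>\<^sup>2"
    using tendsto_Lim[OF trivial_limit_at_top_linorder tendsto_power[OF limit, of 2]]
    by (simp add: power_divide)
  have "(norm X0) ^ 4 = (trace (transpose X0 ** X0))\<^sup>2" and "(norm X0) ^ 4 > 0"
    using \<open>X0 \<noteq> 0\<close> by (simp_all add: trace_transpose_mult_self flip: power_mult)
  with trace_power2_le[of "transpose X0 ** X0"]
  have "real CARD('n) * (norm (transpose X0 ** X0))\<^sup>2 - (norm X0) ^ 4 \<ge> 0" and "(norm X0) ^ 4 > 0"
    by simp_all
  then show "\<rho> \<ge> 0"
    and "\<rho>\<^sup>2 = real CARD('n) * ((norm (transpose X0 ** X0))\<^sup>2 / (norm X0) ^ 4) - 1"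
    by (simp_all add: \<rho>_def field_simps flip: power_mult)
qed

lemma gauss_matrix_expectation_squared_relative_error:
  fixes \<sigma> :: real
  assumes "\<sigma> > 0"
  defines "g \<equiv> \<lambda>X::real^'n^'r. real CARD('n) * ((norm (transpose X ** X))\<^sup>2 / (norm X) ^ 4) - 1"
  shows "integrable (gauss_matrix \<sigma>) g"
    and "integral\<^sup>L (gauss_matrix \<sigma>) g
           = (real CARD('n) ^ 2 + real CARD('n) - 2) / (real CARD('n) * real CARD('r) + 2)"
proof -
  interpret prob_space "gauss_matrix \<sigma> :: (real^'n^'r) measure"
    unfolding gauss_matrix_eq_iid_normal by (rule prob_space_iid_normal[OF \<open>\<sigma> > 0\<close>])
  note ratio = iid_normal_expectation_gram_ratio[where 'n='n and 'r='r, OF \<open>\<sigma> > 0\<close>,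
      folded gauss_matrix_eq_iid_normal]
  show "integrable (gauss_matrix \<sigma>) g"
    unfolding g_def by (intro Bochner_Integration.integrable_diff integrable_mult_right ratio(1)) simp
  have "expectation g = expectation (\<lambda>X. real CARD('n) * ((norm (transpose X ** X))\<^sup>2 / (norm X) ^ 4))
      - expectation (\<lambda>_. 1)"
    unfolding g_def
    by (rule Bochner_Integration.integral_diff[OF integrable_mult_right[OF ratio(1)]]) simp
  also have "\<dots>
      = real CARD('n) * ((real CARD('n) + real CARD('r) + 1) / (real CARD('r) * real CARD('n) + 2)) - 1"
    by (simp only: integral_mult_right_zero ratio(2)) (simp add: prob_space)
  also have "\<dots> = (real CARD('n) ^ 2 + real CARD('n) - 2) / (real CARD('n) * real CARD('r) + 2)"
  proof -
    have "real CARD('r) * real CARD('n) + 2 > 0"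
      by (intro add_nonneg_pos) simp_all
    then show ?thesis
      by (simp add: field_simps power2_eq_square)
  qed
  finally show "expectation g
      = (real CARD('n) ^ 2 + real CARD('n) - 2) / (real CARD('n) * real CARD('r) + 2)" .
qed

lemma lora_expected_relative_error:
  fixes W0 :: "real^'n^'n" and \<sigma> :: real
    and Y :: "real^'n^'r \<Rightarrow> real \<Rightarrow> real^'r^'n" and X :: "real^'n^'r \<Rightarrow> real \<Rightarrow> real^'n^'r"
    and U :: "real^'n^'r \<Rightarrow> real \<Rightarrow> real^'n^'n"
  assumes "\<sigma> > 0" and "trace W0 \<noteq> 0"
    and flows: "\<And>X0. X0 \<noteq> 0 \<Longrightarrow> full_flow W0 0 (U X0) \<and> lora_flow W0 0 X0 (Y X0) (X X0)"
  defines "\<rho> \<equiv> \<lambda>X0. Lim at_top (\<lambda>t. norm (Y X0 t ** X X0 t - U X0 t) / norm (U X0 t))"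
    and "\<rho>\<^sub>2 \<equiv> \<lambda>X0. Lim at_top (\<lambda>t. (norm (Y X0 t ** X X0 t - U X0 t))\<^sup>2 / (norm (U X0 t))\<^sup>2)"
    and "v \<equiv> (real CARD('n) ^ 2 + real CARD('n) - 2) / (real CARD('n) * real CARD('r) + 2)"
  shows "integral\<^sup>L (gauss_matrix \<sigma>) \<rho>\<^sub>2 = v"
    and "integrable (gauss_matrix \<sigma>) \<rho>"
    and "integral\<^sup>L (gauss_matrix \<sigma>) \<rho> \<le> sqrt v"
proof -
  interpret prob_space "gauss_matrix \<sigma> :: (real^'n^'r) measure"
    unfolding gauss_matrix_eq_iid_normal by (rule prob_space_iid_normal[OF \<open>\<sigma> > 0\<close>])
  define R where "R X0 = sqrt (real CARD('n) * (norm (transpose X0 ** X0))\<^sup>2 - (norm X0) ^ 4) / (norm X0)\<^sup>2"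
    for X0 :: "real^'n^'r"
  define g where "g X0 = real CARD('n) * ((norm (transpose X0 ** X0))\<^sup>2 / (norm X0) ^ 4) - 1"
    for X0 :: "real^'n^'r"
  note g_expectation = gauss_matrix_expectation_squared_relative_error[where 'n='n and 'r='r,
      OF \<open>\<sigma> > 0\<close>, folded g_def[abs_def] v_def]
  have pointwise: "\<rho> X0 = R X0 \<and> \<rho>\<^sub>2 X0 = g X0 \<and> (R X0)\<^sup>2 = g X0" if "X0 \<noteq> 0" for X0
    using lora_relative_error_Lim[of W0 X0 "Y X0" "X X0" "U X0"] flows[OF that] that \<open>trace W0 \<noteq> 0\<close>
    by (simp add: \<rho>_def \<rho>\<^sub>2_def R_def g_def)
  have g_meas [measurable]: "g \<in> borel_measurable borel"
    unfolding g_def[abs_def] by measurable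
  have R_meas [measurable]: "R \<in> borel_measurable borel"
    unfolding R_def[abs_def] by measurable
  have \<rho>\<^sub>2_eq: "\<rho>\<^sub>2 = (\<lambda>X0. if X0 = 0 then \<rho>\<^sub>2 0 else g X0)"
    and \<rho>_eq: "\<rho> = (\<lambda>X0. if X0 = 0 then \<rho> 0 else R X0)"
    using pointwise by auto
  have [measurable]: "\<rho>\<^sub>2 \<in> borel_measurable (gauss_matrix \<sigma>)" "\<rho> \<in> borel_measurable (gauss_matrix \<sigma>)"
    by (subst \<rho>\<^sub>2_eq, measurable) (subst \<rho>_eq, measurable)
  have AE_\<rho>: "AE X0 in gauss_matrix \<sigma>. \<rho>\<^sub>2 X0 = g X0 \<and> (\<rho> X0)\<^sup>2 = g X0"
    using AE_iid_normal_nonzero[where 'a="real^'n^'r", folded gauss_matrix_eq_iid_normal]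
    by (rule AE_mp) (auto simp: pointwise)
  show "expectation \<rho>\<^sub>2 = v"
    using AE_\<rho> g_expectation by (subst integral_cong_AE[where g = g]) auto
  have square_int: "integrable (gauss_matrix \<sigma>) (\<lambda>X0. (\<rho> X0)\<^sup>2)"
    using g_expectation AE_\<rho> by (subst integrable_cong_AE[where g = g]) auto
  have "expectation (\<lambda>X0. (\<rho> X0)\<^sup>2) = v"
    using AE_\<rho> g_expectation by (subst integral_cong_AE[where g = g]) auto
  then show "integrable (gauss_matrix \<sigma>) \<rho>" and "expectation \<rho> \<le> sqrt v"
    using expectation_le_sqrt_expectation_power2[OF _ square_int] by simp_all
qed

theorem theorem2p8:
  fixes W0 :: "real^'n^'n"
    and Yf :: "real^'n^'r \<Rightarrow> real \<Rightarrow> real^'r^'n"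
    and Xf :: "real^'n^'r \<Rightarrow> real \<Rightarrow> real^'n^'r"
    and Uf :: "real^'n^'r \<Rightarrow> real \<Rightarrow> real^'n^'n"
    and \<sigma> :: real
  assumes r_lt_n: "CARD('r) < CARD('n)"
    and trW0: "trace W0 \<noteq> 0"
  shows
    "(\<forall>X0 :: real^'n^'r. norm X0 \<noteq> 0 \<longrightarrow> lora_gd_bounded W0 (0::real^'r^'n) X0 \<longrightarrow>
        full_flow W0 ((0::real^'r^'n) ** X0) (Uf X0) \<longrightarrow> lora_flow W0 0 X0 (Yf X0) (Xf X0) \<longrightarrow>
        ((\<lambda>t. norm (Yf X0 t ** Xf X0 t - Uf X0 t) / norm (Uf X0 t)) \<longlongrightarrow>
           sqrt (real CARD('n) * (norm (transpose X0 ** X0))\<^sup>2 - (norm X0) ^ 4) / (norm X0)\<^sup>2) at_top)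
     \<and>
     ((\<sigma> > 0 \<and>
       (\<forall>X0 :: real^'n^'r. norm X0 \<noteq> 0 \<longrightarrow> lora_gd_bounded W0 (0::real^'r^'n) X0 \<and>
          full_flow W0 ((0::real^'r^'n) ** X0) (Uf X0) \<and> lora_flow W0 0 X0 (Yf X0) (Xf X0)))
      \<longrightarrow>
       integral\<^sup>L (gauss_matrix \<sigma>)
          (\<lambda>X0. Lim at_top (\<lambda>t. (norm (Yf X0 t ** Xf X0 t - Uf X0 t))\<^sup>2 / (norm (Uf X0 t))\<^sup>2))
         = (real CARD('n) ^ 2 + real CARD('n) - 2) / (real CARD('n) * real CARD('r) + 2)
       \<and> integrable (gauss_matrix \<sigma>)
          (\<lambda>X0. Lim at_top (\<lambda>t. norm (Yf X0 t ** Xf X0 t - Uf X0 t) / norm (Uf X0 t)))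
       \<and> integral\<^sup>L (gauss_matrix \<sigma>)
          (\<lambda>X0. Lim at_top (\<lambda>t. norm (Yf X0 t ** Xf X0 t - Uf X0 t) / norm (Uf X0 t)))
         \<le> sqrt ((real CARD('n) ^ 2 + real CARD('n) - 2) / (real CARD('n) * real CARD('r) + 2)))"
  using lora_relative_error_tendsto[OF _ _ _ trW0] lora_expected_relative_error[OF _ trW0, of \<sigma> Uf Yf Xf]
  by auto

end
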